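(* Let $X$ be a compact metric space and $f\colon X\to X$ a homeomorphism. Then the set $\mathcal{M}_{idis}(f)$ of Borel probability measures on $X$ that are inner-distal with respect to $f$ is a closed, convex subset of $\mathcal{M}(X)$ satisfying $f_*(\mathcal{M}_{idis}(f))\subseteq\mathcal{M}_{idis}(f)$.
   Context: $\mathcal{M}(X)$ is the set of Borel probability measures on $X$ with the weak* topology ($\mu_n\to\mu$ iff $\int\varphi\,d\mu_n\to\int\varphi\,d\mu$ for all continuous $\varphi\colon X\to\mathbb{R}$). $f_*\mu(E)=\mu(f^{-1}(E))$. The proximal cell of $x$ is $\mathcal{P}(x)=\{y\colon \inf_{n\in\mathbb{Z}} d(f^n(x),f^n(y))=0\}$, and $\mu$ is inner-distal w.r.t. $f$ if $\mu(\operatorname{Int}\mathcal{P}(x))=0$ for all $x\in X$. *)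

theory Defs
  imports "HOL-Analysis.Analysis" "HOL-Probability.Probability"
begin

definition zpow :: "('a \<Rightarrow> 'a) \<Rightarrow> int \<Rightarrow> 'a \<Rightarrow> 'a" where
  "zpow f n = (if 0 \<le> n then f ^^ nat n else inv f ^^ nat (- n))"

definition proximal_cell :: "('a::metric_space \<Rightarrow> 'a) \<Rightarrow> 'a \<Rightarrow> 'a set" where
  "proximal_cell f x = {y. (INF n::int. dist (zpow f n x) (zpow f n y)) = 0}"

definition inner_distal :: "('a::metric_space \<Rightarrow> 'a) \<Rightarrow> 'a measure \<Rightarrow> bool" where
  "inner_distal f \<mu> \<longleftrightarrow> (\<forall>x. emeasure \<mu> (interior (proximal_cell f x)) = 0)"

text \<open>M(X): Borel probability measures on X (X is the whole type).\<close>
definition prob_measures :: "'a::topological_space measure set" where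
  "prob_measures = {\<mu>. prob_space \<mu> \<and> sets \<mu> = sets borel}"

definition weak_star_topology :: "'a::topological_space measure topology" where
  "weak_star_topology = topology_generated_by
     {{\<mu> \<in> prob_measures. (\<integral>x. \<phi> x \<partial>\<mu>) \<in> U} | \<phi> U.
        continuous_on UNIV (\<phi> :: 'a \<Rightarrow> real) \<and> open U}"

definition mix_measure :: "real \<Rightarrow> 'a::topological_space measure \<Rightarrow> 'a measure \<Rightarrow> 'a measure" where
  "mix_measure t \<mu> \<nu> = measure_of UNIV (sets borel)
     (\<lambda>A. ennreal t * emeasure \<mu> A + ennreal (1 - t) * emeasure \<nu> A)"

definition inner_distal_measures :: "('a::metric_space \<Rightarrow> 'a) \<Rightarrow> 'a measure set" where
  "inner_distal_measures f = {\<mu> \<in> prob_measures. inner_distal f \<mu>}"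

end

theory Submission
  imports Defs
begin

text \<open>Closedness: the map \<open>\<mu> \<mapsto> \<mu> U\<close> is weak* lower semicontinuous for open \<open>U\<close>, since
  \<open>\<mu> U > 0\<close> iff \<open>\<integral>\<phi> d\<mu> > 0\<close> for a continuous \<open>0 \<le> \<phi> \<le> 1\<close> vanishing exactly off \<open>U\<close>;
  so the measures vanishing on every open set of a family form a weak* closed set. Invariance: \<open>f\<close> maps proximal cells to proximal cells,
  \<open>f\<^sup>-\<^sup>1(\<P>(x)) = \<P>(f\<^sup>-\<^sup>1 x)\<close>, and being continuous it pulls interiors into interiors.\<close>

lemma zpow_add_one:
  assumes "bij f"
  shows "zpow f (n + 1) x = zpow f n (f x)"
proof -
  have inv_f: "inv f (f y) = y" for y
    using assms by (simp add: bij_is_inj)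
  consider "0 \<le> n" | "n = -1" | "n < -1" by linarith
  then show ?thesis
  proof cases
    case 1
    then have "nat (n + 1) = Suc (nat n)" by simp
    with 1 show ?thesis by (simp add: zpow_def funpow_Suc_right del: funpow.simps)
  next
    case 2
    then show ?thesis by (simp add: zpow_def inv_f)
  next
    case 3
    then have "nat (- n) = Suc (nat (- (n + 1)))" by simp
    with 3 show ?thesis by (simp add: zpow_def funpow_Suc_right inv_f del: funpow.simps)
  qed
qed

lemma proximal_cell_apply_iff:
  assumes "bij f"
  shows "f y \<in> proximal_cell f (f x) \<longleftrightarrow> y \<in> proximal_cell f x"
proof -
  let ?d = "\<lambda>n::int. dist (zpow f n x) (zpow f n y)"
  have "(INF n::int. dist (zpow f n (f x)) (zpow f n (f y))) = (INF n. ?d (n + 1))"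
    by (simp add: zpow_add_one[OF assms])
  also have "\<dots> = (INF n. ?d n)"
    by (simp only: range_composition[of ?d "\<lambda>n. n + 1"] surj_plus_right)
  finally show ?thesis
    by (simp add: proximal_cell_def)
qed

lemma vimage_proximal_cell:
  assumes "bij f"
  shows "f -` proximal_cell f x = proximal_cell f (inv f x)"
  using proximal_cell_apply_iff[OF assms, of _ "inv f x"] assms
  by (auto simp: bij_is_surj surj_f_inv_f)

lemma vimage_interior_subset:
  assumes "continuous_on UNIV f"
  shows "f -` interior S \<subseteq> interior (f -` S)"
  by (intro interior_maximal vimage_mono interior_subset open_vimage[OF open_interior assms])

lemma prob_measuresD:
  assumes "\<mu> \<in> prob_measures"
  shows "prob_space \<mu>" and "sets \<mu> = sets borel" and "space \<mu> = UNIV"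
  using assms sets_eq_imp_space_eq[of \<mu> borel] by (auto simp: prob_measures_def)

lemma measurable_borel_if_continuous:
  assumes "sets M = sets borel" and "continuous_on UNIV f"
  shows "f \<in> measurable M borel"
  using borel_measurable_continuous_onI[OF assms(2)] measurable_cong_sets[OF assms(1) refl]
  by blast

lemma sigma_algebra_borel_UNIV: "sigma_algebra UNIV (sets borel)"
  using sets.sigma_algebra_axioms[of borel] by simp

lemma sets_mix_measure [simp]: "sets (mix_measure t \<mu> \<nu>) = sets borel"
  unfolding mix_measure_def by (rule sigma_algebra.sets_measure_of_eq[OF sigma_algebra_borel_UNIV])

lemma space_mix_measure [simp]: "space (mix_measure t \<mu> \<nu>) = UNIV"
  unfolding mix_measure_def by (rule sigma_algebra.space_measure_of_eq[OF sigma_algebra_borel_UNIV])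

lemma emeasure_mix_measure:
  assumes "sets \<mu> = sets borel" and "sets \<nu> = sets borel" and "A \<in> sets borel"
  shows "emeasure (mix_measure t \<mu> \<nu>) A = ennreal t * emeasure \<mu> A + ennreal (1 - t) * emeasure \<nu> A"
  unfolding mix_measure_def
proof (rule emeasure_measure_of_sigma[OF sigma_algebra_borel_UNIV])
  show "countably_additive (sets borel) (\<lambda>A. ennreal t * emeasure \<mu> A + ennreal (1 - t) * emeasure \<nu> A)"
    unfolding countably_additive_def
  proof (intro allI impI)
    fix A :: "nat \<Rightarrow> 'a set"
    assume "range A \<subseteq> sets borel" and "disjoint_family A"
    then have "(\<Sum>i. emeasure \<mu> (A i)) = emeasure \<mu> (\<Union>i. A i)"
      and "(\<Sum>i. emeasure \<nu> (A i)) = emeasure \<nu> (\<Union>i. A i)"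
      using assms(1,2) by (auto intro!: suminf_emeasure)
    then show "(\<Sum>i. ennreal t * emeasure \<mu> (A i) + ennreal (1 - t) * emeasure \<nu> (A i))
        = ennreal t * emeasure \<mu> (\<Union> (range A)) + ennreal (1 - t) * emeasure \<nu> (\<Union> (range A))"
      by (simp add: suminf_add[symmetric])
  qed
qed (auto simp: positive_def assms(3))

lemma mix_measure_in_prob_measures:
  assumes "\<mu> \<in> prob_measures" and "\<nu> \<in> prob_measures" and "0 \<le> t" and "t \<le> 1"
  shows "mix_measure t \<mu> \<nu> \<in> prob_measures"
proof -
  have "emeasure \<mu> UNIV = 1" and "emeasure \<nu> UNIV = 1"
    using assms(1,2) prob_space.emeasure_space_1[OF prob_measuresD(1)] prob_measuresD(3) by metis+
  then have "emeasure (mix_measure t \<mu> \<nu>) UNIV = ennreal t + ennreal (1 - t)"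
    using assms(1,2) by (simp add: emeasure_mix_measure prob_measuresD(2))
  also have "\<dots> = 1"
    using assms(3,4) by (simp flip: ennreal_plus)
  finally have "prob_space (mix_measure t \<mu> \<nu>)"
    by (intro prob_spaceI) simp
  then show ?thesis
    by (simp add: prob_measures_def)
qed

lemma distr_in_prob_measures:
  assumes "\<mu> \<in> prob_measures" and "f \<in> borel_measurable borel"
  shows "distr \<mu> borel f \<in> prob_measures"
  using prob_space.prob_space_distr[OF prob_measuresD(1)[OF assms(1)]] assms
  by (simp add: prob_measures_def measurable_cong_sets[OF prob_measuresD(2)[OF assms(1)]])

lemma topspace_weak_star_topology: "topspace weak_star_topology = prob_measures"
proof -
  let ?\<S> = "{{\<mu> \<in> prob_measures. (\<integral>x. \<phi> x \<partial>\<mu>) \<in> U} | \<phi> U.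
      continuous_on UNIV (\<phi> :: 'a \<Rightarrow> real) \<and> open U}"
  have "prob_measures \<in> ?\<S>"
    by (intro CollectI exI[of _ "\<lambda>_. 0"] exI[of _ UNIV]) auto
  then have "\<Union>?\<S> = prob_measures"
    by (intro equalityI Union_least Union_upper) auto
  then show ?thesis
    by (simp add: weak_star_topology_def)
qed

lemma openin_weak_star_integral_vimage:
  fixes \<phi> :: "'a::topological_space \<Rightarrow> real"
  assumes "continuous_on UNIV \<phi>" and "open U"
  shows "openin weak_star_topology {\<mu> \<in> prob_measures. (\<integral>x. \<phi> x \<partial>\<mu>) \<in> U}"
  unfolding weak_star_topology_def
  by (intro topology_generated_by_Basis CollectI exI[of _ \<phi>] exI[of _ U] conjI refl assms)

lemma integral_pos_iff_emeasure_nonzero: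
  fixes \<phi> :: "'a \<Rightarrow> real"
  assumes "integrable M \<phi>" and "\<And>x. 0 \<le> \<phi> x" and "{x \<in> space M. \<phi> x \<noteq> 0} \<in> sets M"
  shows "0 < integral\<^sup>L M \<phi> \<longleftrightarrow> emeasure M {x \<in> space M. \<phi> x \<noteq> 0} \<noteq> 0"
proof -
  have "integral\<^sup>L M \<phi> = 0 \<longleftrightarrow> (AE x in M. \<phi> x = 0)"
    using assms(1,2) by (intro integral_nonneg_eq_0_iff_AE) auto
  also have "\<dots> \<longleftrightarrow> emeasure M {x \<in> space M. \<phi> x \<noteq> 0} = 0"
    using assms(3) by (rule AE_iff_measurable) simp
  moreover have "0 \<le> integral\<^sup>L M \<phi>"
    using assms(2) by (simp add: integral_nonneg_AE)
  ultimately show ?thesis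
    by linarith
qed

lemma open_eq_nonzero_set_of_continuous:
  fixes U :: "'a::metric_space set"
  assumes "open U"
  obtains \<phi> :: "'a \<Rightarrow> real"
  where "continuous_on UNIV \<phi>" and "\<And>x. 0 \<le> \<phi> x" and "\<And>x. \<phi> x \<le> 1"
    and "\<And>x. \<phi> x \<noteq> 0 \<longleftrightarrow> x \<in> U"
proof (cases "U = UNIV")
  case True
  then show ?thesis
    by (intro that[of "\<lambda>_. 1"]) auto
next
  case False
  show ?thesis
  proof (rule that[of "\<lambda>x. min 1 (infdist x (- U))"])
    show "continuous_on UNIV (\<lambda>x. min 1 (infdist x (- U)))"
      by (intro continuous_on_min continuous_on_const continuous_on_infdist continuous_on_id)
    fix x
    show "0 \<le> min 1 (infdist x (- U))" and "min 1 (infdist x (- U)) \<le> 1"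
      by (simp_all add: infdist_nonneg)
    have "x \<in> U \<longleftrightarrow> infdist x (- U) \<noteq> 0"
      using in_closed_iff_infdist_zero[of "- U" x] assms False by auto
    then show "min 1 (infdist x (- U)) \<noteq> 0 \<longleftrightarrow> x \<in> U"
      by (simp add: min_def)
  qed
qed

lemma openin_weak_star_emeasure_nonzero:
  fixes U :: "'a::metric_space set"
  assumes "open U"
  shows "openin weak_star_topology {\<mu> \<in> prob_measures. emeasure \<mu> U \<noteq> 0}"
proof -
  obtain \<phi> :: "'a \<Rightarrow> real" where \<phi>: "continuous_on UNIV \<phi>" "\<And>x. 0 \<le> \<phi> x" "\<And>x. \<phi> x \<le> 1"
    and U: "\<And>x. \<phi> x \<noteq> 0 \<longleftrightarrow> x \<in> U"
    using open_eq_nonzero_set_of_continuous[OF assms] by blast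
  have "0 < (\<integral>x. \<phi> x \<partial>\<mu>) \<longleftrightarrow> emeasure \<mu> U \<noteq> 0" if "\<mu> \<in> prob_measures" for \<mu>
  proof -
    interpret prob_space \<mu>
      using prob_measuresD(1)[OF that] .
    have "integrable \<mu> \<phi>"
      using \<phi>(2,3) measurable_borel_if_continuous[OF prob_measuresD(2)[OF that] \<phi>(1)]
      by (intro integrable_const_bound[of _ 1]) auto
    moreover have "{x \<in> space \<mu>. \<phi> x \<noteq> 0} = U"
      using U by (auto simp: prob_measuresD(3)[OF that])
    ultimately show ?thesis
      using integral_pos_iff_emeasure_nonzero[of \<mu> \<phi>] \<phi>(2) assms
      by (simp add: prob_measuresD(2)[OF that])
  qed
  then have "{\<mu> \<in> prob_measures. emeasure \<mu> U \<noteq> 0} = {\<mu> \<in> prob_measures. (\<integral>x. \<phi> x \<partial>\<mu>) \<in> {0<..}}"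
    by auto
  then show ?thesis
    using openin_weak_star_integral_vimage[OF \<phi>(1), of "{0<..}"] by simp
qed

lemma closedin_weak_star_null_on_opens:
  fixes \<U> :: "'a::metric_space set set"
  assumes "\<And>U. U \<in> \<U> \<Longrightarrow> open U"
  shows "closedin weak_star_topology {\<mu> \<in> prob_measures. \<forall>U\<in>\<U>. emeasure \<mu> U = 0}"
proof -
  have "openin weak_star_topology (\<Union>U\<in>\<U>. {\<mu> \<in> prob_measures. emeasure \<mu> U \<noteq> 0})"
    using assms by (auto intro: openin_weak_star_emeasure_nonzero)
  moreover have "(\<Union>U\<in>\<U>. {\<mu> \<in> prob_measures. emeasure \<mu> U \<noteq> 0})
      = prob_measures - {\<mu> \<in> prob_measures. \<forall>U\<in>\<U>. emeasure \<mu> U = 0}"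
    by auto
  ultimately show ?thesis
    by (simp add: closedin_def topspace_weak_star_topology)
qed

lemma inner_distal_mix_measure:
  assumes "sets \<mu> = sets borel" and "sets \<nu> = sets borel"
    and "inner_distal f \<mu>" and "inner_distal f \<nu>"
  shows "inner_distal f (mix_measure t \<mu> \<nu>)"
  using assms by (simp add: inner_distal_def emeasure_mix_measure)

lemma inner_distal_distr:
  assumes "bij f" and "continuous_on UNIV f" and "sets \<mu> = sets borel" and "inner_distal f \<mu>"
  shows "inner_distal f (distr \<mu> borel f)"
  unfolding inner_distal_def
proof
  fix x
  have "emeasure (distr \<mu> borel f) (interior (proximal_cell f x))
      = emeasure \<mu> (f -` interior (proximal_cell f x))"
    using measurable_borel_if_continuous[OF assms(3,2)] sets_eq_imp_space_eq[OF assms(3)]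
    by (simp add: emeasure_distr)
  also have "\<dots> \<le> emeasure \<mu> (interior (proximal_cell f (inv f x)))"
    using vimage_interior_subset[OF assms(2), of "proximal_cell f x"] assms(3)
    by (intro emeasure_mono) (simp_all add: vimage_proximal_cell[OF assms(1)])
  also have "\<dots> = 0"
    using assms(4) by (simp add: inner_distal_def)
  finally show "emeasure (distr \<mu> borel f) (interior (proximal_cell f x)) = 0"
    by simp
qed

theorem lemma3p1:
  fixes f :: "'a::metric_space \<Rightarrow> 'a"
  assumes "compact (UNIV :: 'a set)"
    and "\<exists>g. homeomorphism UNIV UNIV f g"
  shows "closedin weak_star_topology (inner_distal_measures f)
    \<and> (\<forall>\<mu>\<in>inner_distal_measures f. \<forall>\<nu>\<in>inner_distal_measures f. \<forall>t::real.
          0 \<le> t \<and> t \<le> 1 \<longrightarrow> mix_measure t \<mu> \<nu> \<in> inner_distal_measures f)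
    \<and> (\<forall>\<mu>\<in>inner_distal_measures f. distr \<mu> borel f \<in> inner_distal_measures f)"
proof -
  obtain g where "homeomorphism UNIV UNIV f g"
    using assms(2) by blast
  then have bij: "bij f" and cont: "continuous_on UNIV f"
    by (auto simp: homeomorphism_def bij_def intro: inj_on_inverseI)
  have null_on_interiors: "inner_distal_measures f
      = {\<mu> \<in> prob_measures. \<forall>U\<in>range (\<lambda>x. interior (proximal_cell f x)). emeasure \<mu> U = 0}"
    by (auto simp: inner_distal_measures_def inner_distal_def)
  have "closedin weak_star_topology (inner_distal_measures f)"
    unfolding null_on_interiors by (rule closedin_weak_star_null_on_opens) auto
  moreover have "mix_measure t \<mu> \<nu> \<in> inner_distal_measures f"
    if "\<mu> \<in> inner_distal_measures f" "\<nu> \<in> inner_distal_measures f" "0 \<le> t" "t \<le> 1" for \<mu> \<nu> t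
    using that by (auto simp: inner_distal_measures_def prob_measuresD(2)
        intro: mix_measure_in_prob_measures inner_distal_mix_measure)
  moreover have "distr \<mu> borel f \<in> inner_distal_measures f"
    if "\<mu> \<in> inner_distal_measures f" for \<mu>
    using that by (auto simp: inner_distal_measures_def prob_measuresD(2)
        intro: distr_in_prob_measures measurable_borel_if_continuous[OF _ cont]
          inner_distal_distr[OF bij cont])
  ultimately show ?thesis
    by blast
qed

end
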